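(* Let $K$ be a field and let $f\colon\mathbb Z^k\to K$ be a hypergeometric term on $\mathbb Z^k$. Then either $f$ is a zero divisor, or $f$ is nonzero on arbitrarily large $k$-dimensional boxes, i.e. for every $n\ge0$ there is a $k$-dimensional box of size $n$ at every point of which $f$ is nonzero.
   Context: A hypergeometric term on $\mathbb Z^k$ over $K$ is a function $f\colon\mathbb Z^k\to K$ such that for each $i\in\{1,\dots,k\}$ there are nonzero polynomials $A_i,B_i\in K[\vec z]$ with $A_i(\vec z)f(\vec z)=B_i(\vec z)f(\vec z+\vec e_i)$ for all $\vec z\in\mathbb Z^k$. $f$ is a zero divisor if there is a nonzero polynomial $p$ with $p(\vec z)f(\vec z)=0$ for all $\vec z$. A $k$-dimensional box of size $n$ is $\{\vec z\in\mathbb Z^k: c_i\le z_i\le c_i+n,\ i=1,\dots,k\}$ for some $c_i\in\mathbb Z$. *)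

theory Defs
  imports Main
begin

text \<open>A polynomial in the variables z_i (i ranging over the finite index type 'k)
  with coefficients in 'a is represented by its coefficient function, mapping
  exponent vectors (monomials) to coefficients, with finite support.\<close>

definition is_mpoly :: "(('k \<Rightarrow> nat) \<Rightarrow> 'a::zero) \<Rightarrow> bool" where
  "is_mpoly c \<longleftrightarrow> finite {m. c m \<noteq> 0}"

definition mpoly_eval :: "(('k::finite \<Rightarrow> nat) \<Rightarrow> 'a::field) \<Rightarrow> ('k \<Rightarrow> int) \<Rightarrow> 'a" where
  "mpoly_eval c z = (\<Sum>m\<in>{m. c m \<noteq> 0}. c m * (\<Prod>i\<in>UNIV. of_int (z i) ^ m i))"

definition hypergeometric_term :: "(('k::finite \<Rightarrow> int) \<Rightarrow> 'a::field) \<Rightarrow> bool" where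
  "hypergeometric_term f \<longleftrightarrow>
     (\<forall>i. \<exists>A B. is_mpoly A \<and> is_mpoly B \<and> A \<noteq> (\<lambda>_. 0) \<and> B \<noteq> (\<lambda>_. 0) \<and>
        (\<forall>z. mpoly_eval A z * f z = mpoly_eval B z * f (z(i := z i + 1))))"

definition zero_divisor_term :: "(('k::finite \<Rightarrow> int) \<Rightarrow> 'a::field) \<Rightarrow> bool" where
  "zero_divisor_term f \<longleftrightarrow>
     (\<exists>p. is_mpoly p \<and> p \<noteq> (\<lambda>_. 0) \<and> (\<forall>z. mpoly_eval p z * f z = 0))"

definition box_of_size :: "('k \<Rightarrow> int) \<Rightarrow> nat \<Rightarrow> ('k \<Rightarrow> int) set" where
  "box_of_size c n = {z. \<forall>i. c i \<le> z i \<and> z i \<le> c i + int n}"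

end

theory Submission
  imports
    Defs
    "HOL-Library.FuncSet"
    "HOL-Computational_Algebra.Polynomial"
    "HOL-Computational_Algebra.Euclidean_Algorithm"
begin

text \<open>
  In positive characteristic p every f is a zero divisor, killed by the nonzero polynomial
  z_i^p - z_i, which vanishes on all of Z^k by Fermat's little theorem. In characteristic zero,
  fix n and let R(c) be the product of the shifted polynomials A_i(c + w) over all i and all
  w in the box [0, n]^k. By Kronecker substitution a finite family of nonzero polynomials has
  a common non-root in Z^k, so R is a nonzero polynomial; if f is not a zero divisor, then
  R(c) f(c) is nonzero for some c. On the box with corner c all the A_i are nonzero, so the
  relations A_i(z) f(z) = B_i(z) f(z + e_i) carry f(c) \<noteq> 0 to every point of the box.
\<close>

definition monomial_eval :: "('k::finite \<Rightarrow> int) \<Rightarrow> ('k \<Rightarrow> nat) \<Rightarrow> 'a::field" where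
  "monomial_eval z m = (\<Prod>i\<in>UNIV. of_int (z i) ^ m i)"

lemma monomial_eval_add: "monomial_eval z (\<lambda>i. a i + b i) = monomial_eval z a * monomial_eval z b"
  by (simp add: monomial_eval_def power_add prod.distrib)

lemma monomial_eval_var_power:
  "monomial_eval z (\<lambda>j. if j = i then k else 0) = (of_int (z i) :: 'a::field) ^ k"
proof -
  have "monomial_eval z (\<lambda>j. if j = i then k else 0) =
      (\<Prod>j\<in>UNIV. if j = i then (of_int (z i) :: 'a) ^ k else 1)"
    unfolding monomial_eval_def by (rule prod.cong) auto
  then show ?thesis by simp
qed

lemma mpoly_eval_superset:
  fixes p :: "('k::finite \<Rightarrow> nat) \<Rightarrow> 'a::field"
  assumes "finite S" "{m. p m \<noteq> 0} \<subseteq> S"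
  shows "mpoly_eval p z = (\<Sum>m\<in>S. p m * monomial_eval z m)"
  unfolding mpoly_eval_def monomial_eval_def
  by (rule sum.mono_neutral_left) (use assms in auto)

lemma mpoly_eval_zero [simp]: "mpoly_eval (\<lambda>_. 0) z = 0"
  by (simp add: mpoly_eval_def)

lemma is_mpoly_add:
  fixes p q :: "('k \<Rightarrow> nat) \<Rightarrow> 'a::comm_monoid_add"
  assumes "is_mpoly p" "is_mpoly q"
  shows "is_mpoly (\<lambda>m. p m + q m)"
proof -
  have "{m. p m + q m \<noteq> 0} \<subseteq> {m. p m \<noteq> 0} \<union> {m. q m \<noteq> 0}" by auto
  then show ?thesis using assms unfolding is_mpoly_def by (simp add: finite_subset)
qed

lemma mpoly_eval_add:
  fixes p q :: "('k::finite \<Rightarrow> nat) \<Rightarrow> 'a::field"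
  assumes "is_mpoly p" "is_mpoly q"
  shows "mpoly_eval (\<lambda>m. p m + q m) z = mpoly_eval p z + mpoly_eval q z"
proof -
  define S where "S = {m. p m \<noteq> 0} \<union> {m. q m \<noteq> 0}"
  have "finite S" using assms unfolding S_def is_mpoly_def by simp
  moreover have "{m. p m + q m \<noteq> 0} \<subseteq> S" "{m. p m \<noteq> 0} \<subseteq> S" "{m. q m \<noteq> 0} \<subseteq> S"
    unfolding S_def by auto
  ultimately show ?thesis by (simp add: mpoly_eval_superset distrib_right sum.distrib)
qed

definition mpoly_single :: "('k \<Rightarrow> nat) \<Rightarrow> 'a \<Rightarrow> ('k \<Rightarrow> nat) \<Rightarrow> 'a::zero" where
  "mpoly_single m c = (\<lambda>m'. if m' = m then c else 0)"

lemma is_mpoly_single: "is_mpoly (mpoly_single m c)"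
  unfolding is_mpoly_def mpoly_single_def by (rule finite_subset[of _ "{m}"]) auto

lemma mpoly_eval_single: "mpoly_eval (mpoly_single m c) z = c * monomial_eval z m"
  by (subst mpoly_eval_superset[of "{m}"]) (auto simp: mpoly_single_def)

definition polyfun :: "(('k::finite \<Rightarrow> int) \<Rightarrow> 'a::field) \<Rightarrow> bool" where
  "polyfun g \<longleftrightarrow> (\<exists>p. is_mpoly p \<and> mpoly_eval p = g)"

lemma polyfun_monomial: "polyfun (\<lambda>z. c * monomial_eval z m)"
  unfolding polyfun_def using is_mpoly_single mpoly_eval_single by blast

lemma polyfun_const: "polyfun (\<lambda>z. c)"
  using polyfun_monomial[of c "\<lambda>_. 0"] by (simp add: monomial_eval_def)

lemma polyfun_var: "polyfun (\<lambda>z. of_int (z i))"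
  using polyfun_monomial[of 1 "\<lambda>j. if j = i then 1 else 0"] by (simp add: monomial_eval_var_power)

lemma polyfun_add: "polyfun g \<Longrightarrow> polyfun h \<Longrightarrow> polyfun (\<lambda>z. g z + h z)"
  unfolding polyfun_def using is_mpoly_add mpoly_eval_add by fast

lemma polyfun_mult:
  fixes g h :: "('k::finite \<Rightarrow> int) \<Rightarrow> 'a::field"
  assumes "polyfun g" "polyfun h"
  shows "polyfun (\<lambda>z. g z * h z)"
proof -
  obtain p q where p: "is_mpoly p" "mpoly_eval p = g" and q: "is_mpoly q" "mpoly_eval q = h"
    using assms unfolding polyfun_def by blast
  define P where "P = {m. p m \<noteq> 0} \<times> {m. q m \<noteq> 0}"
  have fin_P: "finite P" using p q unfolding P_def is_mpoly_def by auto
  define s where "s = (\<lambda>x::('k \<Rightarrow> nat) \<times> ('k \<Rightarrow> nat). \<lambda>i. fst x i + snd x i)"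
  define r where "r = (\<lambda>m. \<Sum>x\<in>{x\<in>P. s x = m}. p (fst x) * q (snd x))"
  have supp_r: "{m. r m \<noteq> 0} \<subseteq> s ` P"
  proof
    fix m assume "m \<in> {m. r m \<noteq> 0}"
    then have "r m \<noteq> 0" by simp
    then have "{x\<in>P. s x = m} \<noteq> {}" unfolding r_def by (rule contrapos_nn) (simp only: sum.empty)
    then show "m \<in> s ` P" by blast
  qed
  have "is_mpoly r" unfolding is_mpoly_def using finite_subset[OF supp_r] fin_P by simp
  moreover have "mpoly_eval r z = g z * h z" for z
  proof -
    have "mpoly_eval r z = (\<Sum>m\<in>s ` P. r m * monomial_eval z m)"
      using fin_P supp_r by (simp add: mpoly_eval_superset)
    also have "\<dots> = (\<Sum>m\<in>s ` P. \<Sum>x\<in>{x\<in>P. s x = m}. p (fst x) * q (snd x) * monomial_eval z (s x))"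
      unfolding r_def sum_distrib_right by (intro sum.cong refl) auto
    also have "\<dots> = (\<Sum>x\<in>P. p (fst x) * q (snd x) * monomial_eval z (s x))"
      using fin_P by (intro sum.group) auto
    also have "\<dots> = (\<Sum>x\<in>P. (p (fst x) * monomial_eval z (fst x)) * (q (snd x) * monomial_eval z (snd x)))"
      unfolding s_def monomial_eval_add by (intro sum.cong refl) (simp add: ac_simps)
    also have "\<dots> = (\<Sum>a\<in>{m. p m \<noteq> 0}. p a * monomial_eval z a) *
        (\<Sum>b\<in>{m. q m \<noteq> 0}. q b * monomial_eval z b)"
      unfolding P_def sum_product sum.cartesian_product by (simp add: case_prod_beta)
    also have "\<dots> = g z * h z"
      unfolding p(2)[symmetric] q(2)[symmetric] by (simp add: mpoly_eval_def monomial_eval_def)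
    finally show ?thesis .
  qed
  ultimately show ?thesis unfolding polyfun_def by blast
qed

lemma polyfun_sum: "finite I \<Longrightarrow> (\<And>x. x \<in> I \<Longrightarrow> polyfun (g x)) \<Longrightarrow> polyfun (\<lambda>z. \<Sum>x\<in>I. g x z)"
  by (induction I rule: finite_induct) (auto intro!: polyfun_add polyfun_const)

lemma polyfun_prod: "finite I \<Longrightarrow> (\<And>x. x \<in> I \<Longrightarrow> polyfun (g x)) \<Longrightarrow> polyfun (\<lambda>z. \<Prod>x\<in>I. g x z)"
  by (induction I rule: finite_induct) (auto intro!: polyfun_mult polyfun_const)

lemma polyfun_power: "polyfun g \<Longrightarrow> polyfun (\<lambda>z. g z ^ n)"
  by (induction n) (auto intro!: polyfun_mult polyfun_const)

lemma polyfun_mpoly_eval_shift: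
  assumes "is_mpoly p"
  shows "polyfun (\<lambda>z. mpoly_eval p (\<lambda>i. z i + w i))"
proof -
  have "polyfun (\<lambda>z. \<Sum>m\<in>{m. p m \<noteq> 0}. p m * (\<Prod>i\<in>UNIV. (of_int (z i) + of_int (w i)) ^ m i))"
    using assms unfolding is_mpoly_def
    by (intro polyfun_sum polyfun_mult polyfun_const polyfun_prod polyfun_power polyfun_add polyfun_var)
      auto
  then show ?thesis by (simp add: mpoly_eval_def)
qed

lemma base_digits_unique:
  fixes a b :: "nat \<Rightarrow> nat"
  assumes "\<And>j. j < M \<Longrightarrow> a j < D" "\<And>j. j < M \<Longrightarrow> b j < D"
    and "(\<Sum>j<M. a j * D ^ j) = (\<Sum>j<M. b j * D ^ j)" "j < M"
  shows "a j = b j"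
  using assms
proof (induction M arbitrary: a b j)
  case 0
  then show ?case by simp
next
  case (Suc M)
  have split: "(\<Sum>j<Suc M. c j * D ^ j) = c 0 + D * (\<Sum>j<M. c (Suc j) * D ^ j)" for c :: "nat \<Rightarrow> nat"
    unfolding sum.lessThan_Suc_shift by (simp add: sum_distrib_left ac_simps del: sum.lessThan_Suc)
  have eq: "a 0 + D * (\<Sum>j<M. a (Suc j) * D ^ j) = b 0 + D * (\<Sum>j<M. b (Suc j) * D ^ j)"
    using Suc.prems(3) unfolding split .
  have "a 0 < D" "b 0 < D" using Suc.prems(1,2) by auto
  then have a0: "a 0 = b 0"
    using arg_cong[OF eq, of "\<lambda>x. x mod D"] by simp
  with eq \<open>a 0 < D\<close> have "(\<Sum>j<M. a (Suc j) * D ^ j) = (\<Sum>j<M. b (Suc j) * D ^ j)" by simp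
  then show ?case
    using a0 Suc.prems Suc.IH[of "\<lambda>j. a (Suc j)" "\<lambda>j. b (Suc j)" "j - 1"] by (cases j) auto
qed

text \<open>Kronecker substitution z_i \<mapsto> t^(D^(g i)) sends distinct monomials with exponents
  below D to distinct powers of t.\<close>

definition kronecker_weight :: "('k::finite \<Rightarrow> nat) \<Rightarrow> nat \<Rightarrow> ('k \<Rightarrow> nat) \<Rightarrow> nat" where
  "kronecker_weight g D m = (\<Sum>i\<in>UNIV. m i * D ^ g i)"

lemma kronecker_weight_inj:
  assumes g: "bij_betw g UNIV {..<n}" and "\<And>i. m i < D" "\<And>i. m' i < D"
    and "kronecker_weight g D m = kronecker_weight g D m'"
  shows "m = m'"
proof
  fix i
  define h where "h = inv_into UNIV g"
  have weight: "kronecker_weight g D m = (\<Sum>j<n. m (h j) * D ^ j)" for m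
    unfolding kronecker_weight_def h_def
    using sum.reindex_bij_betw[OF g, of "\<lambda>j. m (inv_into UNIV g j) * D ^ j"] g
    by (simp add: bij_betw_inv_into_left)
  have "g i < n" using g by (auto simp: bij_betw_def)
  then have "m (h (g i)) = m' (h (g i))"
    using assms(2-4) by (intro base_digits_unique[of n "\<lambda>j. m (h j)" D "\<lambda>j. m' (h j)"]) (auto simp: weight)
  then show "m i = m' i" using g by (simp add: h_def bij_betw_inv_into_left)
qed

definition kronecker_poly :: "('k::finite \<Rightarrow> nat) \<Rightarrow> nat \<Rightarrow> (('k \<Rightarrow> nat) \<Rightarrow> 'a) \<Rightarrow> 'a::field poly" where
  "kronecker_poly g D p = (\<Sum>m\<in>{m. p m \<noteq> 0}. monom (p m) (kronecker_weight g D m))"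

lemma mpoly_eval_kronecker:
  "mpoly_eval p (\<lambda>i. t ^ (D ^ g i)) = poly (kronecker_poly g D p) (of_int t)"
proof -
  have "monomial_eval (\<lambda>i. t ^ (D ^ g i)) m = (of_int t :: 'a) ^ kronecker_weight g D m" for m
    unfolding monomial_eval_def kronecker_weight_def power_sum
    by (simp add: power_mult[symmetric] mult.commute)
  then show ?thesis
    by (simp add: kronecker_poly_def mpoly_eval_def poly_sum poly_monom monomial_eval_def)
qed

lemma kronecker_poly_nonzero:
  assumes g: "bij_betw g UNIV {..<n}" and p: "is_mpoly p" "p \<noteq> (\<lambda>_. 0)"
    and small: "\<And>m i. p m \<noteq> 0 \<Longrightarrow> m i < D"
  shows "kronecker_poly g D p \<noteq> 0"
proof -
  obtain m0 where m0: "p m0 \<noteq> 0" using p by fastforce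
  have "coeff (kronecker_poly g D p) (kronecker_weight g D m0) =
      (\<Sum>m\<in>{m. p m \<noteq> 0}. if m = m0 then p m else 0)"
    unfolding kronecker_poly_def coeff_sum coeff_monom
  proof (intro sum.cong refl)
    fix m assume "m \<in> {m. p m \<noteq> 0}"
    then have "kronecker_weight g D m = kronecker_weight g D m0 \<longleftrightarrow> m = m0"
      using kronecker_weight_inj[OF g, of m D m0] small m0 by auto
    then show "(if kronecker_weight g D m = kronecker_weight g D m0 then p m else 0) =
        (if m = m0 then p m else 0)" by simp
  qed
  also have "\<dots> = p m0" using p m0 by (simp add: is_mpoly_def sum.delta')
  finally show ?thesis using m0 by auto
qed

lemma inj_of_int_CHAR_0:
  assumes "CHAR('a::ring_1) = 0"
  shows "inj (of_int :: int \<Rightarrow> 'a)"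
proof (rule injI)
  fix x y :: int assume "(of_int x :: 'a) = of_int y"
  then have "(of_int (x - y) :: 'a) = 0" by simp
  then have "int CHAR('a) dvd x - y" by (simp only: of_int_eq_0_iff_char_dvd)
  then show "x = y" using assms by simp
qed

lemma mpolys_common_nonroot:
  fixes p :: "'i \<Rightarrow> ('k::finite \<Rightarrow> nat) \<Rightarrow> 'a::field"
  assumes char: "CHAR('a) = 0" and fin: "finite I"
    and p: "\<And>x. x \<in> I \<Longrightarrow> is_mpoly (p x) \<and> p x \<noteq> (\<lambda>_. 0)"
  shows "\<exists>z. \<forall>x\<in>I. mpoly_eval (p x) z \<noteq> 0"
proof -
  obtain g :: "'k \<Rightarrow> nat" and n where g: "bij_betw g UNIV {..<n}"
    using finite_imp_inj_to_nat_seg[of "UNIV :: 'k set"] by (auto simp: bij_betw_def lessThan_def)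
  define U where "U = (\<Union>x\<in>I. \<Union>m\<in>{m. p x m \<noteq> 0}. range m)"
  have "finite U" unfolding U_def using fin p unfolding is_mpoly_def by auto
  define D where "D = Suc (Max U)"
  have small: "m i < D" if "x \<in> I" "p x m \<noteq> 0" for x m i
  proof -
    have "m i \<in> U" unfolding U_def using that by blast
    then show ?thesis unfolding D_def using \<open>finite U\<close> by (simp add: le_imp_less_Suc)
  qed
  define Q where "Q = (\<Prod>x\<in>I. kronecker_poly g D (p x))"
  have "kronecker_poly g D (p x) \<noteq> 0" if "x \<in> I" for x
    using kronecker_poly_nonzero[OF g] p[OF that] small[OF that] by blast
  then have "Q \<noteq> 0" unfolding Q_def using fin by (simp add: prod_zero_iff)
  then have "finite (of_int -` {y. poly Q y = 0} :: int set)"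
    using poly_roots_finite inj_of_int_CHAR_0[OF char] by (intro finite_vimageI) auto
  then obtain t :: int where "poly Q (of_int t) \<noteq> 0"
    using ex_new_if_finite[OF infinite_UNIV_int] by blast
  then have "\<forall>x\<in>I. poly (kronecker_poly g D (p x)) (of_int t) \<noteq> 0"
    unfolding Q_def poly_prod using fin by (simp add: prod_zero_iff)
  then have "\<forall>x\<in>I. mpoly_eval (p x) (\<lambda>i. t ^ (D ^ g i)) \<noteq> 0"
    by (simp add: mpoly_eval_kronecker)
  then show ?thesis by blast
qed

lemma polyfun_prod_nonzero:
  fixes g :: "'i \<Rightarrow> ('k::finite \<Rightarrow> int) \<Rightarrow> 'a::field"
  assumes "CHAR('a) = 0" "finite I"
    and "\<And>x. x \<in> I \<Longrightarrow> polyfun (g x)" "\<And>x. x \<in> I \<Longrightarrow> \<exists>z. g x z \<noteq> 0"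
  shows "\<exists>z. (\<Prod>x\<in>I. g x z) \<noteq> 0"
proof -
  obtain p where p: "\<And>x. x \<in> I \<Longrightarrow> is_mpoly (p x) \<and> mpoly_eval (p x) = g x"
    using assms(3) unfolding polyfun_def by metis
  have "p x \<noteq> (\<lambda>_. 0)" if "x \<in> I" for x
    using p[OF that] assms(4)[OF that] by (metis mpoly_eval_zero)
  then obtain z where "\<forall>x\<in>I. mpoly_eval (p x) z \<noteq> 0"
    using mpolys_common_nonroot[OF assms(1,2)] p by blast
  then show ?thesis using p assms(2) by (auto simp: prod_zero_iff)
qed

lemma finite_box_of_size [simp]: "finite (box_of_size (c :: 'k::finite \<Rightarrow> int) n)"
proof (rule finite_subset)
  show "box_of_size c n \<subseteq> Pi\<^sub>E UNIV (\<lambda>i. {c i..c i + int n})"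
    unfolding box_of_size_def PiE_UNIV_domain by auto
qed (intro finite_PiE; simp)

lemma box_of_size_translate:
  "z \<in> box_of_size c n \<longleftrightarrow> (\<lambda>i. z i - c i) \<in> box_of_size (\<lambda>_ :: 'k. 0 :: int) n"
  unfolding box_of_size_def by (simp add: diff_le_eq add.commute)

lemma corner_with_coefficients_nonzero_on_box:
  fixes f :: "('k::finite \<Rightarrow> int) \<Rightarrow> 'a::field" and A :: "'k \<Rightarrow> ('k \<Rightarrow> nat) \<Rightarrow> 'a"
  assumes "CHAR('a) = 0" "\<not> zero_divisor_term f"
    and A: "\<And>i. is_mpoly (A i)" "\<And>i. A i \<noteq> (\<lambda>_. 0)"
  shows "\<exists>c. f c \<noteq> 0 \<and> (\<forall>i. \<forall>z\<in>box_of_size c n. mpoly_eval (A i) z \<noteq> 0)"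
proof -
  define I where "I = (UNIV :: 'k set) \<times> box_of_size (\<lambda>_ :: 'k. 0 :: int) n"
  have "finite I" unfolding I_def by simp
  define G where "G = (\<lambda>x z. mpoly_eval (A (fst x)) (\<lambda>j. z j + snd x j))"
  have G_nonzero: "\<exists>z. G x z \<noteq> 0" for x
  proof -
    obtain z0 where "mpoly_eval (A (fst x)) z0 \<noteq> 0"
      using mpolys_common_nonroot[OF assms(1), of "{fst x}" "\<lambda>_. A (fst x)"] A by auto
    then have "G x (\<lambda>j. z0 j - snd x j) \<noteq> 0" by (simp add: G_def)
    then show ?thesis by blast
  qed
  have G_polyfun: "polyfun (G x)" for x
    unfolding G_def using A(1) by (rule polyfun_mpoly_eval_shift)
  have "\<exists>z. (\<Prod>x\<in>I. G x z) \<noteq> 0"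
    using assms(1) \<open>finite I\<close> G_polyfun G_nonzero by (rule polyfun_prod_nonzero)
  then obtain z1 where z1: "(\<Prod>x\<in>I. G x z1) \<noteq> 0" ..
  have "polyfun (\<lambda>z. \<Prod>x\<in>I. G x z)"
    using \<open>finite I\<close> G_polyfun by (rule polyfun_prod)
  then obtain R where R: "is_mpoly R" "mpoly_eval R = (\<lambda>z. \<Prod>x\<in>I. G x z)"
    unfolding polyfun_def by blast
  have "R \<noteq> (\<lambda>_. 0)" using z1 R(2) by (metis mpoly_eval_zero)
  then obtain c where c: "(\<Prod>x\<in>I. G x c) * f c \<noteq> 0"
    using assms(2) R unfolding zero_divisor_term_def by (metis (mono_tags))
  have "mpoly_eval (A i) z \<noteq> 0" if "z \<in> box_of_size c n" for i z
  proof -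
    have "(i, \<lambda>j. z j - c j) \<in> I" using that unfolding I_def box_of_size_translate[of z] by simp
    then have "G (i, \<lambda>j. z j - c j) c \<noteq> 0" using c \<open>finite I\<close> by (auto simp: prod_zero_iff)
    then show ?thesis by (simp add: G_def)
  qed
  with c show ?thesis by auto
qed

lemma recurrence_nonzero_on_box:
  fixes f :: "('k::finite \<Rightarrow> int) \<Rightarrow> 'a::field"
  assumes rec: "\<And>i z. A i z * f z = B i z * f (z(i := z i + 1))"
    and "f c \<noteq> 0" and A_nonzero: "\<And>i z. z \<in> box_of_size c n \<Longrightarrow> A i z \<noteq> 0"
    and "z \<in> box_of_size c n"
  shows "f z \<noteq> 0"
  using \<open>z \<in> box_of_size c n\<close>
proof (induction "\<Sum>i\<in>UNIV. nat (z i - c i)" arbitrary: z rule: less_induct)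
  case less
  show ?case
  proof (cases "z = c")
    case True
    then show ?thesis using \<open>f c \<noteq> 0\<close> by simp
  next
    case False
    then obtain i where "z i \<noteq> c i" by auto
    moreover have "c i \<le> z i" using less.prems unfolding box_of_size_def by blast
    ultimately have "z i > c i" by simp
    define z' where "z' = z(i := z i - 1)"
    have z'_box: "z' \<in> box_of_size c n"
      unfolding box_of_size_def
    proof (intro CollectI allI)
      fix j
      have "c j \<le> z j \<and> z j \<le> c j + int n" using less.prems unfolding box_of_size_def by blast
      then show "c j \<le> z' j \<and> z' j \<le> c j + int n" using \<open>z i > c i\<close> unfolding z'_def by auto
    qed
    have "(\<Sum>j\<in>UNIV. nat (z' j - c j)) < (\<Sum>j\<in>UNIV. nat (z j - c j))"
      by (rule sum_strict_mono_ex1) (use \<open>z i > c i\<close> in \<open>auto simp: z'_def\<close>)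
    then have "A i z' * f z' \<noteq> 0"
      using less.hyps z'_box A_nonzero[OF z'_box] by simp
    moreover have "z'(i := z' i + 1) = z" unfolding z'_def by auto
    ultimately show ?thesis using rec[of i z'] by auto
  qed
qed

lemma of_int_power_CHAR:
  assumes "CHAR('a::field) > 0"
  shows "(of_int t :: 'a) ^ CHAR('a) = of_int t"
proof -
  have prime: "prime CHAR('a)" using prime_CHAR_semidom[OF assms] .
  have of_nat: "(of_nat n :: 'a) ^ CHAR('a) = of_nat n" for n
    using freshmans_dream_sum[OF prime refl, of "\<lambda>_. 1::'a" "{..<n}"] by simp
  show ?thesis
  proof (cases "t \<ge> 0")
    case True
    then show ?thesis using of_nat[of "nat t"] by simp
  next
    case False
    then have "(of_int t :: 'a) = - of_nat (nat (- t))" by simp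
    then show ?thesis using of_nat minus_power_prime_CHAR[OF refl prime] by simp
  qed
qed

lemma zero_divisor_term_if_CHAR_pos:
  fixes f :: "('k::finite \<Rightarrow> int) \<Rightarrow> 'a::field"
  assumes "CHAR('a) > 0"
  shows "zero_divisor_term f"
proof -
  fix i :: 'k
  define var_power where "var_power = (\<lambda>k j. if j = i then k else (0::nat))"
  have "CHAR('a) \<noteq> 1" using prime_CHAR_semidom[OF assms] by auto
  then have distinct: "var_power CHAR('a) \<noteq> var_power 1"
    unfolding var_power_def by (metis (mono_tags))
  define q where "q = (\<lambda>m. mpoly_single (var_power CHAR('a)) (1::'a) m +
    mpoly_single (var_power 1) (- 1) m)"
  have "is_mpoly q" unfolding q_def by (intro is_mpoly_add is_mpoly_single)
  moreover have "q (var_power CHAR('a)) = 1"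
    using distinct by (simp add: q_def mpoly_single_def)
  then have "q \<noteq> (\<lambda>_. 0)" by (metis one_neq_zero)
  moreover have "mpoly_eval q z = 0" for z
    using of_int_power_CHAR[OF assms, of "z i"]
    by (simp add: q_def mpoly_eval_add is_mpoly_single mpoly_eval_single var_power_def
        monomial_eval_var_power)
  ultimately show ?thesis unfolding zero_divisor_term_def by auto
qed

theorem lemmaB17:
  fixes f :: "('k::finite \<Rightarrow> int) \<Rightarrow> 'a::field"
  assumes "hypergeometric_term f"
  shows "zero_divisor_term f \<or> (\<forall>n::nat. \<exists>c. \<forall>z\<in>box_of_size c n. f z \<noteq> 0)"
proof (cases "CHAR('a) = 0")
  case False
  then show ?thesis using zero_divisor_term_if_CHAR_pos by blast
next
  case True
  obtain A B where A: "\<And>i. is_mpoly (A i)" "\<And>i. A i \<noteq> (\<lambda>_. 0)"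
    and rec: "\<And>i z. mpoly_eval (A i) z * f z = mpoly_eval (B i) z * f (z(i := z i + 1))"
    using assms unfolding hypergeometric_term_def by metis
  have "\<exists>c. \<forall>z\<in>box_of_size c n. f z \<noteq> 0" if not_zd: "\<not> zero_divisor_term f" for n
  proof -
    obtain c where "f c \<noteq> 0" "\<And>i z. z \<in> box_of_size c n \<Longrightarrow> mpoly_eval (A i) z \<noteq> 0"
      using corner_with_coefficients_nonzero_on_box[OF True not_zd, of A n] A by blast
    then show ?thesis using recurrence_nonzero_on_box[OF rec] by blast
  qed
  then show ?thesis by blast
qed

end
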